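(* Let $G$ be a finite non-abelian group which is exponent-critical. Then the order of $G$ is divisible by at most three distinct primes.
   Context: A finite group $G$ is called exponent-critical if the exponent $\exp(G)$ of $G$ is not equal to the least common multiple of the exponents of the proper non-abelian subgroups of $G$ (the least common multiple of an empty collection being $1$). *)

theory Defs
  imports "HOL-Algebra.Algebra"
begin

(* exponent of a subset (subgroup) H of group G: lcm of the orders of its elements;
   the order of an element of a subgroup is the same computed in G or in H *)
definition set_exponent :: "('a, 'b) monoid_scheme \<Rightarrow> 'a set \<Rightarrow> nat" where
  "set_exponent G H = Lcm ((group.ord G) ` H)"

definition group_exponent :: "('a, 'b) monoid_scheme \<Rightarrow> nat" where
  "group_exponent G = set_exponent G (carrier G)"

definition nonabelian_set :: "('a, 'b) monoid_scheme \<Rightarrow> 'a set \<Rightarrow> bool" where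
  "nonabelian_set G H \<longleftrightarrow> (\<exists>x\<in>H. \<exists>y\<in>H. x \<otimes>\<^bsub>G\<^esub> y \<noteq> y \<otimes>\<^bsub>G\<^esub> x)"

definition exponent_critical :: "('a, 'b) monoid_scheme \<Rightarrow> bool" where
  "exponent_critical G \<longleftrightarrow>
     group_exponent G \<noteq>
     Lcm {set_exponent G H | H. subgroup H G \<and> H \<noteq> carrier G \<and> nonabelian_set G H}"

end

theory Submission
  imports Defs
begin

(*
  If G is exponent-critical, some prime power p^k exactly dividing exp G does not divide the
  exponent of any proper non-abelian subgroup. An element x of order p^k therefore has the
  property that every proper subgroup containing x is abelian. Suppose |G| has at least four
  prime divisors; then every subgroup containing x whose order involves at most three primes is
  proper, hence abelian, and we show that G itself is abelian.

  First, x is central. A Sylow p-subgroup P containing x is abelian. For every other prime s we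
  find a Sylow s-subgroup S normalised by x, so that S<x> is abelian: directly if P is normal,
  and otherwise because N_G(P), a proper subgroup containing x, is abelian, so Burnside's
  theorem (proved via the transfer into P) yields a normal p-complement K, and a Frattini
  argument for a Sylow s-subgroup of K provides S. Hence the centraliser of x contains a full
  Sylow subgroup for every prime, so it is G.

  With x central, R<x> is abelian for every Sylow subgroup R. For primes r other than p, a Sylow
  r-subgroup R is normal: if not, N_G(R) is a proper subgroup containing x, Burnside's theorem
  gives a normal r-complement, which contains x and is therefore abelian, and this forces R to
  be central. Finally any two Sylow subgroups R, S for different primes commute, as one of them
  is normal and RS<x> is abelian; so every Sylow subgroup is central and G is abelian.
*)

hide_const (open) Divisibility.prime

section \<open>Arithmetic of prime multiplicities\<close>

lemma multiplicity_mult_prime_power_other: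
  fixes n :: nat
  assumes "prime s" "prime r" "s \<noteq> r" "n \<noteq> 0"
  shows "multiplicity s (n * r ^ b) = multiplicity s n"
  using assms prime_elem_multiplicity_mult_distrib[of s n "r ^ b"]
    multiplicity_distinct_prime_power[of s r b] by (simp add: prime_gt_0_nat)

lemma multiplicity_Lcm_attained:
  fixes A :: "nat set"
  assumes "finite A" "A \<noteq> {}" "0 \<notin> A" "prime q"
  shows "\<exists>a\<in>A. multiplicity q (Lcm A) = multiplicity q a"
  using assms(1-3)
proof (induction A rule: finite_ne_induct)
  case (insert a A)
  have "Lcm A \<noteq> 0" using insert Lcm_0_iff[of A] by simp
  then have "multiplicity q (Lcm (insert a A)) = max (multiplicity q a) (multiplicity q (Lcm A))"
    using insert.prems multiplicity_lcm[of a "Lcm A" q] assms(4) by simp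
  then show ?case using insert by (metis insertCI max_def)
qed simp

lemma prime_power_not_dvd_proper_divisor:
  fixes L e :: nat
  assumes "L dvd e" "L \<noteq> e" "e \<noteq> 0"
  shows "\<exists>q. prime q \<and> \<not> q ^ multiplicity q e dvd L"
proof (rule ccontr)
  assume "\<not> ?thesis"
  then have "multiplicity q e \<le> multiplicity q L" if "prime q" for q
    using that assms power_dvd_iff_le_multiplicity[of L q "multiplicity q e"] prime_gt_1_nat[of q]
    by (cases "L = 0") auto
  then have "e dvd L" using multiplicity_le_imp_dvd[OF assms(3)] by blast
  then show False using assms(1,2) dvd_antisym by blast
qed

lemma prime_factors_subset_if_dvd_prime_powers:
  fixes n a b c :: nat
  assumes "n dvd a ^ i * b ^ j * c ^ l" "prime a" "prime b" "prime c"
  shows "prime_factors n \<subseteq> {a, b, c}"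
proof
  fix w assume "w \<in> prime_factors n"
  then have w: "prime w" "w dvd a ^ i * b ^ j * c ^ l" using assms(1) by (auto intro: dvd_trans)
  then have "w dvd a \<or> w dvd b \<or> w dvd c" by (auto simp: prime_dvd_mult_iff dest: prime_dvd_power)
  then show "w \<in> {a, b, c}" using w(1) assms(2-4) primes_dvd_imp_eq by blast
qed

section \<open>Conjugates, normalizers and centralizers\<close>

definition conj_set :: "('a, 'b) monoid_scheme \<Rightarrow> 'a \<Rightarrow> 'a set \<Rightarrow> 'a set" where
  "conj_set G g A = (\<lambda>a. g \<otimes>\<^bsub>G\<^esub> a \<otimes>\<^bsub>G\<^esub> inv\<^bsub>G\<^esub> g) ` A"

definition centralizer :: "('a, 'b) monoid_scheme \<Rightarrow> 'a set \<Rightarrow> 'a set" where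
  "centralizer G A = {g \<in> carrier G. \<forall>a\<in>A. g \<otimes>\<^bsub>G\<^esub> a = a \<otimes>\<^bsub>G\<^esub> g}"

definition abelian_set :: "('a, 'b) monoid_scheme \<Rightarrow> 'a set \<Rightarrow> bool" where
  "abelian_set G A \<longleftrightarrow> (\<forall>a\<in>A. \<forall>b\<in>A. a \<otimes>\<^bsub>G\<^esub> b = b \<otimes>\<^bsub>G\<^esub> a)"

definition sylow_subgroup :: "('a, 'b) monoid_scheme \<Rightarrow> nat \<Rightarrow> 'a set \<Rightarrow> bool" where
  "sylow_subgroup G p P \<longleftrightarrow> subgroup P G \<and> card P = p ^ multiplicity p (order G)"

lemma abelian_set_subset: "abelian_set G B \<Longrightarrow> A \<subseteq> B \<Longrightarrow> abelian_set G A"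
  unfolding abelian_set_def by blast

context group
begin

lemma inv_mult_cancel_left [simp]: "g \<in> carrier G \<Longrightarrow> x \<in> carrier G \<Longrightarrow> inv g \<otimes> (g \<otimes> x) = x"
  by (simp flip: m_assoc)

lemma mult_inv_cancel_left [simp]: "g \<in> carrier G \<Longrightarrow> x \<in> carrier G \<Longrightarrow> g \<otimes> (inv g \<otimes> x) = x"
  by (simp flip: m_assoc)

lemma conj_set_eq_cosets: "conj_set G g A = g <# A #> inv g"
  unfolding conj_set_def l_coset_def r_coset_def by auto

lemma conj_setI: "a \<in> A \<Longrightarrow> g \<otimes> a \<otimes> inv g \<in> conj_set G g A"
  unfolding conj_set_def by auto

lemma conj_set_mono: "A \<subseteq> B \<Longrightarrow> conj_set G g A \<subseteq> conj_set G g B"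
  unfolding conj_set_def by auto

lemma card_conj_set:
  assumes "g \<in> carrier G" "A \<subseteq> carrier G"
  shows "card (conj_set G g A) = card A"
  unfolding conj_set_def
  by (rule card_image, rule inj_onI) (use assms in \<open>auto simp: subset_iff\<close>)

lemma conj_set_mult:
  assumes "g \<in> carrier G" "h \<in> carrier G" "A \<subseteq> carrier G"
  shows "conj_set G (g \<otimes> h) A = conj_set G g (conj_set G h A)"
  unfolding conj_set_def image_image using assms
  by (intro image_cong refl) (auto simp: inv_mult_group m_assoc subset_iff)

lemma conj_set_inv_cancel:
  assumes "g \<in> carrier G" "A \<subseteq> carrier G"
  shows "conj_set G (inv g) (conj_set G g A) = A"
proof -
  have "conj_set G (inv g) (conj_set G g A) = conj_set G \<one> A"
    using conj_set_mult[of "inv g" g A] assms by simp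
  also have "\<dots> = A"
    unfolding conj_set_def using assms by (auto simp: subset_iff image_iff)
  finally show ?thesis .
qed

lemma subgroup_conj_set: "subgroup H G \<Longrightarrow> g \<in> carrier G \<Longrightarrow> subgroup (conj_set G g H) G"
  unfolding conj_set_eq_cosets by (rule subgroup_conjugation_is_surj2)

lemma conj_set_consistent:
  "subgroup H G \<Longrightarrow> c \<in> H \<Longrightarrow> conj_set (G\<lparr>carrier := H\<rparr>) c A = conj_set G c A"
  unfolding conj_set_def by simp

lemma normal_conj_set:
  assumes N: "N \<lhd> G" and g: "g \<in> carrier G"
  shows "conj_set G g N = N"
proof
  show "conj_set G g N \<subseteq> N"
    unfolding conj_set_def using normal.inv_op_closed2[OF N g] by blast
  show "N \<subseteq> conj_set G g N"
  proof
    fix n assume n: "n \<in> N"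
    have nc: "n \<in> carrier G" using subgroup.mem_carrier[OF normal_imp_subgroup[OF N] n] .
    have "g \<otimes> (inv g \<otimes> n \<otimes> g) \<otimes> inv g \<in> conj_set G g N"
      using normal.inv_op_closed1[OF N g n] by (rule conj_setI)
    moreover have "g \<otimes> (inv g \<otimes> n \<otimes> g) \<otimes> inv g = n"
      using nc g by (simp add: m_assoc)
    ultimately show "n \<in> conj_set G g N" by simp
  qed
qed

lemma normalizer_iff:
  "A \<subseteq> carrier G \<Longrightarrow> g \<in> normalizer G A \<longleftrightarrow> g \<in> carrier G \<and> conj_set G g A = A"
  unfolding normalizer_def stabilizer_def conj_set_eq_cosets by auto

lemma subgroup_subset_normalizer: "subgroup H G \<Longrightarrow> H \<subseteq> normalizer G H"
  using subgroup.subset[OF normal_imp_subgroup[OF subgroup_in_normalizer]] by force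

lemma normalizer_eq_carrier_iff_normal:
  assumes "subgroup H G"
  shows "normalizer G H = carrier G \<longleftrightarrow> H \<lhd> G"
proof
  assume N: "normalizer G H = carrier G"
  show "H \<lhd> G"
  proof (rule normal_invI[OF assms])
    fix g h assume "g \<in> carrier G" "h \<in> H"
    then show "g \<otimes> h \<otimes> inv g \<in> H"
      using N normalizer_iff[OF subgroup.subset[OF assms]] conj_setI by blast
  qed
next
  assume "H \<lhd> G"
  then show "normalizer G H = carrier G"
    using normalizer_iff[OF subgroup.subset[OF assms]] normal_conj_set
      subgroup.subset[OF normalizer_imp_subgroup[OF subgroup.subset[OF assms]]] by blast
qed

lemma subgroup_centralizer:
  assumes "A \<subseteq> carrier G"
  shows "subgroup (centralizer G A) G"
proof
  fix g h assume gh: "g \<in> centralizer G A" "h \<in> centralizer G A"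
  have "g \<otimes> h \<otimes> a = a \<otimes> (g \<otimes> h)" if a: "a \<in> A" for a
  proof -
    have c: "g \<in> carrier G" "h \<in> carrier G" "a \<in> carrier G"
      using gh a assms unfolding centralizer_def by auto
    have "g \<otimes> h \<otimes> a = g \<otimes> (a \<otimes> h)" using gh a c unfolding centralizer_def by (simp add: m_assoc)
    also have "\<dots> = a \<otimes> (g \<otimes> h)" using gh a c unfolding centralizer_def by (simp flip: m_assoc)
    finally show ?thesis .
  qed
  then show "g \<otimes> h \<in> centralizer G A" using gh unfolding centralizer_def by auto
next
  fix g assume g: "g \<in> centralizer G A"
  have "inv g \<otimes> a = a \<otimes> inv g" if a: "a \<in> A" for a
  proof -
    have c: "g \<in> carrier G" "a \<in> carrier G" using g a assms unfolding centralizer_def by auto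
    have "a \<otimes> g = g \<otimes> a" using g a unfolding centralizer_def by auto
    then have "inv g \<otimes> (a \<otimes> g) \<otimes> inv g = a \<otimes> inv g"
      using c by (metis inv_closed l_inv l_one m_assoc)
    then show ?thesis using c by (simp add: m_assoc)
  qed
  then show "inv g \<in> centralizer G A" using g unfolding centralizer_def by auto
qed (use assms in \<open>auto simp: centralizer_def\<close>)

lemma centralizer_sym:
  "A \<subseteq> carrier G \<Longrightarrow> B \<subseteq> carrier G \<Longrightarrow> B \<subseteq> centralizer G A \<longleftrightarrow> A \<subseteq> centralizer G B"
  unfolding centralizer_def subset_iff mem_Collect_eq by (metis (full_types))

lemma conj_set_centralizer:
  assumes g: "g \<in> centralizer G A" and A: "A \<subseteq> carrier G"
  shows "conj_set G g A = A"
proof -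
  have "g \<otimes> a \<otimes> inv g = a" if a: "a \<in> A" for a
  proof -
    have c: "g \<in> carrier G" "a \<in> carrier G" using g a A unfolding centralizer_def by auto
    have "g \<otimes> a \<otimes> inv g = a \<otimes> g \<otimes> inv g" using g a unfolding centralizer_def by auto
    also have "\<dots> = a" using c by (simp add: m_assoc)
    finally show ?thesis .
  qed
  then show ?thesis unfolding conj_set_def by simp
qed

lemma centralizer_subset_normalizer:
  assumes "A \<subseteq> carrier G"
  shows "centralizer G A \<subseteq> normalizer G A"
proof
  fix g assume g: "g \<in> centralizer G A"
  then have "g \<in> carrier G" unfolding centralizer_def by simp
  then show "g \<in> normalizer G A"
    using normalizer_iff[OF assms] conj_set_centralizer[OF g assms] by simp
qed

lemma central_imp_normal:
  assumes H: "subgroup H G" and central: "centralizer G H = carrier G"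
  shows "H \<lhd> G"
proof -
  have "normalizer G H = carrier G"
  proof (rule equalityI)
    show "normalizer G H \<subseteq> carrier G"
      using subgroup.subset[OF normalizer_imp_subgroup[OF subgroup.subset[OF H]]] .
    show "carrier G \<subseteq> normalizer G H"
      using centralizer_subset_normalizer[OF subgroup.subset[OF H]] central by simp
  qed
  then show ?thesis using normalizer_eq_carrier_iff_normal[OF H] by simp
qed

lemma set_mult_subset_left: "subgroup H G \<Longrightarrow> subgroup K G \<Longrightarrow> H \<subseteq> H <#> K"
  unfolding set_mult_def by (force intro: subgroup.one_closed dest: subgroup.mem_carrier)

lemma set_mult_subset_right: "subgroup H G \<Longrightarrow> subgroup K G \<Longrightarrow> K \<subseteq> H <#> K"
  unfolding set_mult_def by (force intro: subgroup.one_closed dest: subgroup.mem_carrier)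

lemma subgroup_set_mult_normalizer:
  assumes H: "subgroup H G" and K: "subgroup K G" and KN: "K \<subseteq> normalizer G H"
  shows "subgroup (H <#> K) G"
proof -
  have N: "subgroup (normalizer G H) G" using normalizer_imp_subgroup[OF subgroup.subset[OF H]] .
  have "subgroup (H <#> K) (G\<lparr>carrier := normalizer G H\<rparr>)"
    using mult_norm_sub_in_sub[OF subgroup_in_normalizer[OF H] subgroup_incl[OF K N KN] N] .
  then show ?thesis using incl_subgroup[OF N] by blast
qed

lemma abelian_set_conj_set:
  assumes "abelian_set G A" "A \<subseteq> carrier G" "g \<in> carrier G"
  shows "abelian_set G (conj_set G g A)"
proof -
  have "(g \<otimes> a \<otimes> inv g) \<otimes> (g \<otimes> b \<otimes> inv g) = g \<otimes> (a \<otimes> b) \<otimes> inv g"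
    if "a \<in> carrier G" "b \<in> carrier G" for a b
    using that assms(3) by (simp add: m_assoc)
  then show ?thesis
    using assms unfolding abelian_set_def conj_set_def by (auto simp: subset_iff)
qed

lemma abelian_set_subset_centralizer:
  "abelian_set G A \<Longrightarrow> A \<subseteq> carrier G \<Longrightarrow> B \<subseteq> A \<Longrightarrow> A \<subseteq> centralizer G B"
  unfolding abelian_set_def centralizer_def by blast

end

section \<open>Finite groups and products of subgroups\<close>

locale finite_group = group +
  assumes finite_carrier [simp]: "finite (carrier G)"

context finite_group
begin

lemma finite_subgroup: "subgroup H G \<Longrightarrow> finite H"
  by (rule finite_subset[OF subgroup.subset finite_carrier])

lemma card_subgroup_pos: "subgroup H G \<Longrightarrow> 0 < card H"
  using finite_subgroup subgroup.one_closed card_gt_0_iff by blast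

lemma prime_power_dvd_card_subgroup_iff:
  "subgroup H G \<Longrightarrow> prime p \<Longrightarrow> p ^ i dvd card H \<longleftrightarrow> i \<le> multiplicity p (card H)"
  using power_dvd_iff_le_multiplicity[of "card H" p i] card_subgroup_pos prime_gt_1_nat[of p] by simp

lemma order_pos: "0 < order G"
  by (simp add: order_gt_0_iff_finite)

lemma finite_group_subgroup: "subgroup H G \<Longrightarrow> finite_group (G\<lparr>carrier := H\<rparr>)"
  by (simp add: finite_group_def finite_group_axioms_def subgroup_imp_group finite_subgroup)

lemma card_subgroup_dvd:
  assumes "subgroup H G" "subgroup K G" "H \<subseteq> K"
  shows "card H dvd card K"
proof -
  interpret K: group "G\<lparr>carrier := K\<rparr>" using subgroup_imp_group[OF assms(2)] .
  have "card (rcosets\<^bsub>G\<lparr>carrier := K\<rparr>\<^esub> H) * card H = card K"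
    using K.lagrange[OF subgroup_incl[OF assms]] by (simp add: order_def)
  then show ?thesis by (metis dvd_triv_right)
qed

lemma card_subgroup_dvd_order: "subgroup H G \<Longrightarrow> card H dvd order G"
  using lagrange by (metis dvd_triv_right)

lemma card_set_mult_fibre:
  assumes H: "subgroup H G" and K: "subgroup K G" and h0: "h0 \<in> H" and k0: "k0 \<in> K"
  shows "card {z \<in> H \<times> K. fst z \<otimes> snd z = h0 \<otimes> k0} = card (H \<inter> K)"
proof -
  interpret H: subgroup H G by fact
  interpret K: subgroup K G by fact
  have c0: "h0 \<in> carrier G" "k0 \<in> carrier G" using h0 k0 by auto
  have "bij_betw (\<lambda>d. (h0 \<otimes> d, inv d \<otimes> k0)) (H \<inter> K) {z \<in> H \<times> K. fst z \<otimes> snd z = h0 \<otimes> k0}"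
  proof (rule bij_betwI')
    fix d e assume "d \<in> H \<inter> K" "e \<in> H \<inter> K"
    then show "((h0 \<otimes> d, inv d \<otimes> k0) = (h0 \<otimes> e, inv e \<otimes> k0)) = (d = e)"
      using c0 by auto
  next
    fix d assume d: "d \<in> H \<inter> K"
    then have "d \<in> carrier G" by auto
    then show "(h0 \<otimes> d, inv d \<otimes> k0) \<in> {z \<in> H \<times> K. fst z \<otimes> snd z = h0 \<otimes> k0}"
      using d h0 k0 c0 by (auto simp: m_assoc)
  next
    fix z assume z: "z \<in> {z \<in> H \<times> K. fst z \<otimes> snd z = h0 \<otimes> k0}"
    then obtain h k where hk: "z = (h, k)" "h \<in> H" "k \<in> K" "h \<otimes> k = h0 \<otimes> k0" by auto
    have c: "h \<in> carrier G" "k \<in> carrier G" using hk by auto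
    define d where "d = inv h0 \<otimes> h"
    have d_alt: "d = k0 \<otimes> inv k"
    proof -
      have "inv h0 \<otimes> (h \<otimes> k) \<otimes> inv k = inv h0 \<otimes> (h0 \<otimes> k0) \<otimes> inv k" using hk by simp
      then show ?thesis unfolding d_def using c c0 by (simp add: m_assoc)
    qed
    have "d \<in> H" unfolding d_def using hk h0 by simp
    moreover have "d \<in> K" unfolding d_alt using hk k0 by simp
    ultimately have "d \<in> H \<inter> K" by blast
    moreover have "h0 \<otimes> d = h" unfolding d_def using c c0 by simp
    moreover have "inv d \<otimes> k0 = k" unfolding d_alt using c c0 by (simp add: inv_mult_group m_assoc)
    ultimately have "d \<in> H \<inter> K \<and> z = (h0 \<otimes> d, inv d \<otimes> k0)" using hk by simp
    then show "\<exists>d\<in>H \<inter> K. z = (h0 \<otimes> d, inv d \<otimes> k0)" by blast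
  qed
  then show ?thesis by (simp add: bij_betw_same_card)
qed

lemma card_set_mult_Int:
  assumes H: "subgroup H G" and K: "subgroup K G"
  shows "card (H <#> K) * card (H \<inter> K) = card H * card K"
proof -
  define fibre where "fibre y = {z \<in> H \<times> K. fst z \<otimes> snd z = y}" for y
  have "H \<times> K = (\<Union>y\<in>H <#> K. fibre y)"
    unfolding fibre_def set_mult_def by fastforce
  then have "card (H \<times> K) = card (\<Union>y\<in>H <#> K. fibre y)" by simp
  also have "\<dots> = (\<Sum>y\<in>H <#> K. card (fibre y))"
  proof (rule card_UN_disjoint)
    show "finite (H <#> K)"
      using finite_subset[OF set_mult_closed[OF subgroup.subset[OF H] subgroup.subset[OF K]]] by simp
    show "\<forall>y\<in>H <#> K. finite (fibre y)"
      unfolding fibre_def using finite_subgroup[OF H] finite_subgroup[OF K] by simp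
  qed (auto simp: fibre_def)
  also have "\<dots> = (\<Sum>y\<in>H <#> K. card (H \<inter> K))"
  proof (rule sum.cong[OF refl])
    fix y assume "y \<in> H <#> K"
    then obtain h k where "h \<in> H" "k \<in> K" "y = h \<otimes> k" unfolding set_mult_def by blast
    then show "card (fibre y) = card (H \<inter> K)" unfolding fibre_def using card_set_mult_fibre[OF H K] by simp
  qed
  also have "\<dots> = card (H <#> K) * card (H \<inter> K)" by simp
  finally show ?thesis by (simp add: card_cartesian_product)
qed

lemma card_set_mult_dvd: "subgroup H G \<Longrightarrow> subgroup K G \<Longrightarrow> card (H <#> K) dvd card H * card K"
  using card_set_mult_Int by (metis dvd_triv_left)

end

section \<open>Sylow theory\<close>

lemma group_action_restrict:
  fixes G (structure) and act :: "'a \<Rightarrow> 'c \<Rightarrow> 'c"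
  assumes "group G"
    and closed: "\<And>g z. g \<in> carrier G \<Longrightarrow> z \<in> E \<Longrightarrow> act g z \<in> E"
    and one: "\<And>z. z \<in> E \<Longrightarrow> act \<one> z = z"
    and mult: "\<And>g h z. g \<in> carrier G \<Longrightarrow> h \<in> carrier G \<Longrightarrow> z \<in> E \<Longrightarrow>
                 act (g \<otimes> h) z = act g (act h z)"
  shows "group_action G E (\<lambda>g. restrict (act g) E)"
proof -
  interpret group G by fact
  have inv_act: "act (inv g) (act g z) = z" if "g \<in> carrier G" "z \<in> E" for g z
    using mult[of "inv g" g z] one that by simp
  have bij: "restrict (act g) E \<in> Bij E" if g: "g \<in> carrier G" for g
  proof -
    have "bij_betw (act g) E E"
    proof (rule bij_betwI[where g = "act (inv g)"])
      show "act g \<in> E \<rightarrow> E" "act (inv g) \<in> E \<rightarrow> E" using closed g by auto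
      show "act (inv g) (act g z) = z" if "z \<in> E" for z using inv_act g that by blast
      show "act g (act (inv g) z) = z" if "z \<in> E" for z
        using inv_act[of "inv g" z] g that by simp
    qed
    then show ?thesis unfolding Bij_def using bij_betw_restrict_eq by blast
  qed
  have "(\<lambda>g. restrict (act g) E) \<in> hom G (BijGroup E)"
  proof (rule homI)
    fix g h assume gh: "g \<in> carrier G" "h \<in> carrier G"
    have "restrict (act (g \<otimes> h)) E = compose E (restrict (act g) E) (restrict (act h) E)"
      unfolding compose_def using gh closed mult by (intro restrict_ext) simp
    then show "restrict (act (g \<otimes> h)) E
        = restrict (act g) E \<otimes>\<^bsub>BijGroup E\<^esub> restrict (act h) E"
      using bij gh by (simp add: BijGroup_def)
  qed (use bij in \<open>simp add: BijGroup_def\<close>)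
  then show ?thesis
    unfolding group_action_def by (intro group_hom.intro group_hom_axioms.intro is_group group_BijGroup)
qed

lemma (in group_action) fixed_point_of_prime_power_order:
  assumes p: "prime p" and ord: "order G = p ^ j" and E: "finite E" and ndvd: "\<not> p dvd card E"
  shows "\<exists>z\<in>E. \<forall>g\<in>carrier G. \<phi> g z = z"
proof (rule ccontr)
  assume nofix: "\<not> ?thesis"
  have "p dvd card (orbit G \<phi> z)" if z: "z \<in> E" for z
  proof -
    have "card (orbit G \<phi> z) dvd p ^ j"
      using orbit_stabilizer_theorem[OF z] ord by (metis dvd_triv_left)
    then obtain i where i: "card (orbit G \<phi> z) = p ^ i" using p by (auto simp: divides_primepow_nat)
    have "i \<noteq> 0"
    proof
      assume "i = 0"
      then have "orbit G \<phi> z = {z}"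
        using i orbit_refl[OF z] by (metis card_1_singletonE singletonD power_0)
      then have "\<forall>g\<in>carrier G. \<phi> g z = z" unfolding orbit_def by blast
      then show False using nofix z by blast
    qed
    then show ?thesis using i by simp
  qed
  then have "p dvd (\<Sum>orb\<in>orbits G E \<phi>. card orb)"
    by (intro dvd_sum) (auto simp: orbits_def)
  moreover have "(\<Sum>orb\<in>orbits G E \<phi>. card orb) = card E"
    using disjoint_sum[OF E, of "\<lambda>_. 1::nat"] by simp
  ultimately show False using ndvd by simp
qed

lemma (in group) group_action_rcosets:
  assumes P: "subgroup P G" and Q: "subgroup Q G"
  shows "group_action (G\<lparr>carrier := Q\<rparr>) (rcosets P) (\<lambda>q. restrict (\<lambda>C. C #> inv q) (rcosets P))"
proof -
  interpret P: subgroup P G by fact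
  interpret Q: subgroup Q G by fact
  interpret GQ: group "G\<lparr>carrier := Q\<rparr>" using subgroup_imp_group[OF Q] .
  show ?thesis
  proof (rule group_action_restrict[OF GQ.is_group])
    fix q C assume q: "q \<in> carrier (G\<lparr>carrier := Q\<rparr>)" and "C \<in> rcosets P"
    then obtain a where a: "a \<in> carrier G" "C = P #> a" unfolding RCOSETS_def by auto
    then have "C #> inv q = P #> (a \<otimes> inv q)" using q P.subset by (simp add: coset_mult_assoc)
    then show "C #> inv q \<in> rcosets P" using a q P.subset by (simp add: rcosetsI)
  next
    fix C assume "C \<in> rcosets P"
    then show "C #> inv\<^bsub>G\<^esub> \<one>\<^bsub>G\<lparr>carrier := Q\<rparr>\<^esub> = C"
      using P.rcosets_carrier[OF is_group] by simp
  next
    fix q q' C assume "q \<in> carrier (G\<lparr>carrier := Q\<rparr>)" "q' \<in> carrier (G\<lparr>carrier := Q\<rparr>)" "C \<in> rcosets P"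
    then show "C #> inv (q \<otimes>\<^bsub>G\<lparr>carrier := Q\<rparr>\<^esub> q') = C #> inv q' #> inv q"
      using P.rcosets_carrier[OF is_group] by (simp add: coset_mult_assoc inv_mult_group)
  qed
qed

context finite_group
begin

lemma sylow_subgroup_exists: "prime p \<Longrightarrow> \<exists>P. sylow_subgroup G p P"
  using sylow_thm[of p G "multiplicity p (order G)"] multiplicity_dvd[of p "order G"] is_group
  unfolding sylow_subgroup_def by (metis dvd_def finite_carrier)

lemma prime_power_dvd_order_iff:
  "prime p \<Longrightarrow> p ^ i dvd order G \<longleftrightarrow> i \<le> multiplicity p (order G)"
  using power_dvd_iff_le_multiplicity[of "order G" p i] order_pos prime_gt_1_nat[of p] by simp

lemma sylow_index_not_dvd:
  assumes p: "prime p" and P: "sylow_subgroup G p P"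
  shows "\<not> p dvd card (rcosets P)"
proof
  assume "p dvd card (rcosets P)"
  then obtain c where "card (rcosets P) = p * c" by blast
  moreover have "card (rcosets P) * card P = order G" using lagrange P unfolding sylow_subgroup_def by blast
  ultimately have "p ^ Suc (multiplicity p (order G)) dvd order G"
    using P unfolding sylow_subgroup_def by (metis dvd_triv_left mult.assoc mult.commute power_Suc)
  then show False using prime_power_dvd_order_iff[OF p, of "Suc (multiplicity p (order G))"] by simp
qed

lemma subgroup_eq_carrier_if_sylows:
  assumes H: "subgroup H G"
    and sylows: "\<And>r. prime r \<Longrightarrow> r dvd order G \<Longrightarrow> \<exists>R. sylow_subgroup G r R \<and> R \<subseteq> H"
  shows "H = carrier G"
proof -
  have "order G dvd card H"
  proof (rule multiplicity_le_imp_dvd)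
    show "order G \<noteq> 0" using order_pos by simp
    fix r :: nat assume r: "prime r"
    show "multiplicity r (order G) \<le> multiplicity r (card H)"
    proof (cases "r dvd order G")
      case True
      then obtain R where "sylow_subgroup G r R" "R \<subseteq> H" using sylows r by blast
      then have "r ^ multiplicity r (order G) dvd card H"
        using card_subgroup_dvd[OF _ H] unfolding sylow_subgroup_def by metis
      then show ?thesis using prime_power_dvd_card_subgroup_iff[OF H r] by simp
    qed (simp add: not_dvd_imp_multiplicity_0)
  qed
  then have "card (carrier G) \<le> card H"
    using card_subgroup_pos[OF H] by (simp add: order_def dvd_imp_le)
  then show ?thesis using subgroup.subset[OF H] by (simp add: card_seteq)
qed

lemma centralizer_eq_carrier_if_sylows:
  assumes "A \<subseteq> carrier G"
    and "\<And>s. prime s \<Longrightarrow> s dvd order G \<Longrightarrow> \<exists>S. sylow_subgroup G s S \<and> S \<subseteq> centralizer G A"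
  shows "centralizer G A = carrier G"
  using subgroup_eq_carrier_if_sylows[OF subgroup_centralizer] assms by blast

lemma sylow_subgroup_conj_set:
  assumes "sylow_subgroup G p P" "g \<in> carrier G"
  shows "sylow_subgroup G p (conj_set G g P)"
  using assms subgroup_conj_set card_conj_set[OF _ subgroup.subset]
  unfolding sylow_subgroup_def by simp

lemma prime_power_subgroup_subset_conj_sylow:
  assumes p: "prime p" and P: "sylow_subgroup G p P" and Q: "subgroup Q G" and card_Q: "card Q = p ^ j"
  shows "\<exists>g\<in>carrier G. Q \<subseteq> conj_set G g P"
proof -
  interpret P: subgroup P G using P unfolding sylow_subgroup_def by blast
  interpret Q: subgroup Q G by fact
  have act: "group_action (G\<lparr>carrier := Q\<rparr>) (rcosets P) (\<lambda>q. restrict (\<lambda>C. C #> inv q) (rcosets P))"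
    using group_action_rcosets[OF P.subgroup_axioms Q] .
  have "finite (rcosets P)"
    using finite_subset[OF rcosets_subset_PowG[OF P.subgroup_axioms]] by simp
  then obtain C where C: "C \<in> rcosets P" and fixed: "\<And>q. q \<in> Q \<Longrightarrow> C #> inv q = C"
    using group_action.fixed_point_of_prime_power_order[OF act p _ _ sylow_index_not_dvd[OF p P], of j]
      card_Q by (auto simp: order_def)
  obtain a where a: "a \<in> carrier G" "C = P #> a" using C unfolding RCOSETS_def by auto
  have "q \<in> conj_set G (inv a) P" if q: "q \<in> Q" for q
  proof -
    have qc: "q \<in> carrier G" using q by simp
    have "P #> a #> inv (inv q) = P #> a" using fixed[of "inv q"] q a by simp
    then have "P #> (a \<otimes> q) = P #> a" using a qc P.subset by (simp add: coset_mult_assoc)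
    then have "P #> (a \<otimes> q \<otimes> inv a) = P" using coset_mult_inv2 a qc P.subset by simp
    then have "a \<otimes> q \<otimes> inv a \<in> P" using coset_join1[OF _ _ P.subgroup_axioms] a qc by simp
    then have "inv a \<otimes> (a \<otimes> q \<otimes> inv a) \<otimes> inv (inv a) \<in> conj_set G (inv a) P" by (rule conj_setI)
    then show ?thesis using a qc by (simp add: m_assoc)
  qed
  then show ?thesis using a by blast
qed

lemma sylow_subgroups_conjugate:
  assumes p: "prime p" and P: "sylow_subgroup G p P" and Q: "sylow_subgroup G p Q"
  shows "\<exists>g\<in>carrier G. Q = conj_set G g P"
proof -
  obtain g where g: "g \<in> carrier G" "Q \<subseteq> conj_set G g P"
    using prime_power_subgroup_subset_conj_sylow[OF p P] Q unfolding sylow_subgroup_def by blast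
  have "card Q = card (conj_set G g P)"
    using sylow_subgroup_conj_set[OF P g(1)] Q unfolding sylow_subgroup_def by simp
  then have "Q = conj_set G g P"
    using g sylow_subgroup_conj_set[OF P g(1)] finite_subgroup unfolding sylow_subgroup_def
    by (metis card_subset_eq)
  then show ?thesis using g by blast
qed

lemma prime_power_subgroup_subset_sylow:
  assumes p: "prime p" and Q: "subgroup Q G" "card Q = p ^ j"
  shows "\<exists>P. sylow_subgroup G p P \<and> Q \<subseteq> P"
proof -
  obtain P where P: "sylow_subgroup G p P" using sylow_subgroup_exists[OF p] by blast
  then show ?thesis
    using prime_power_subgroup_subset_conj_sylow[OF p P Q] sylow_subgroup_conj_set by blast
qed

lemma sylow_subgroup_restrict_iff:
  assumes K: "subgroup K G" and PK: "P \<subseteq> K"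
  shows "sylow_subgroup (G\<lparr>carrier := K\<rparr>) p P \<longleftrightarrow> subgroup P G \<and> card P = p ^ multiplicity p (card K)"
  using subgroup_incl[OF _ K PK] incl_subgroup[OF K] unfolding sylow_subgroup_def order_def by auto

lemma sylow_subgroup_of_subgroup_exists:
  assumes K: "subgroup K G" and s: "prime s"
  shows "\<exists>S. subgroup S G \<and> S \<subseteq> K \<and> card S = s ^ multiplicity s (card K)"
proof -
  interpret K: finite_group "G\<lparr>carrier := K\<rparr>" using finite_group_subgroup[OF K] .
  obtain S where S: "sylow_subgroup (G\<lparr>carrier := K\<rparr>) s S" using K.sylow_subgroup_exists[OF s] by blast
  then have "S \<subseteq> K" using subgroup.subset unfolding sylow_subgroup_def by fastforce
  then show ?thesis using S sylow_subgroup_restrict_iff[OF K] by blast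
qed

lemma sylow_subgroups_conjugate_in_subgroup:
  assumes s: "prime s" and K: "subgroup K G"
    and Q: "subgroup Q G" "Q \<subseteq> K" "card Q = s ^ multiplicity s (card K)"
    and Q': "subgroup Q' G" "Q' \<subseteq> K" "card Q' = s ^ multiplicity s (card K)"
  shows "\<exists>c\<in>K. Q' = conj_set G c Q"
proof -
  interpret K: finite_group "G\<lparr>carrier := K\<rparr>" using finite_group_subgroup[OF K] .
  have "sylow_subgroup (G\<lparr>carrier := K\<rparr>) s Q" "sylow_subgroup (G\<lparr>carrier := K\<rparr>) s Q'"
    using sylow_subgroup_restrict_iff[OF K] Q Q' by simp_all
  then obtain c where "c \<in> K" "Q' = conj_set (G\<lparr>carrier := K\<rparr>) c Q"
    using K.sylow_subgroups_conjugate[OF s] by auto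
  then show ?thesis using conj_set_consistent[OF K] by auto
qed

lemma multiplicity_card_subgroup_eq:
  assumes p: "prime p" and H: "subgroup H G" and dvd: "p ^ multiplicity p (order G) dvd card H"
  shows "multiplicity p (card H) = multiplicity p (order G)"
proof (rule antisym)
  show "multiplicity p (card H) \<le> multiplicity p (order G)"
    using dvd_imp_multiplicity_le[OF card_subgroup_dvd_order[OF H]] order_pos by simp
  show "multiplicity p (order G) \<le> multiplicity p (card H)"
    using prime_power_dvd_card_subgroup_iff[OF H p] dvd by simp
qed

lemma prime_power_subgroups_eq_in_abelian:
  assumes s: "prime s" and K: "subgroup K G" "abelian_set G K"
    and S: "subgroup S G" "S \<subseteq> K" "card S = s ^ multiplicity s (card K)"
    and S': "subgroup S' G" "S' \<subseteq> K" "card S' = s ^ multiplicity s (card K)"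
  shows "S = S'"
proof -
  define m where "m = multiplicity s (card K)"
  have "S' \<subseteq> centralizer G S"
    using K(2) S(2) S'(2) subgroup.subset[OF K(1)] unfolding abelian_set_def centralizer_def by blast
  then have SS': "subgroup (S <#> S') G"
    using subgroup_set_mult_normalizer[OF S(1) S'(1)] centralizer_subset_normalizer[OF subgroup.subset[OF S(1)]]
    by blast
  have "card (S <#> S') dvd s ^ (m + m)"
    using card_set_mult_dvd[OF S(1) S'(1)] S(3) S'(3) unfolding m_def by (simp add: power_add)
  then obtain i where i: "card (S <#> S') = s ^ i" using s by (auto simp: divides_primepow_nat)
  have "S <#> S' \<subseteq> K"
    unfolding set_mult_def using S(2) S'(2) subgroup.m_closed[OF K(1)] by blast
  then have "s ^ i dvd card K" using card_subgroup_dvd[OF SS' K(1)] i by simp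
  then have "i \<le> m" using prime_power_dvd_card_subgroup_iff[OF K(1) s] unfolding m_def by simp
  then have "card (S <#> S') \<le> card S"
    using i S(3) prime_gt_1_nat[OF s] unfolding m_def by (simp add: power_increasing)
  then have "S <#> S' = S"
    using card_seteq[OF finite_subgroup[OF SS'] set_mult_subset_left[OF S(1) S'(1)]] by simp
  then have "S' \<subseteq> S" using set_mult_subset_right[OF S(1) S'(1)] by simp
  then show ?thesis using card_subset_eq[OF finite_subgroup[OF S(1)]] S(3) S'(3) by metis
qed

lemma normal_sylow_of_normal_abelian:
  assumes s: "prime s" and K: "K \<lhd> G" "abelian_set G K"
    and S: "subgroup S G" "S \<subseteq> K" "card S = s ^ multiplicity s (card K)"
  shows "S \<lhd> G"
proof (rule normal_invI[OF S(1)])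
  fix g h assume g: "g \<in> carrier G" and h: "h \<in> S"
  have "conj_set G g S \<subseteq> K" using conj_set_mono[OF S(2)] normal_conj_set[OF K(1) g] by blast
  moreover have "card (conj_set G g S) = s ^ multiplicity s (card K)"
    using card_conj_set[OF g subgroup.subset[OF S(1)]] S(3) by simp
  ultimately have "S = conj_set G g S"
    by (rule prime_power_subgroups_eq_in_abelian[OF s normal_imp_subgroup[OF K(1)] K(2) S
          subgroup_conj_set[OF S(1) g]])
  then show "g \<otimes> h \<otimes> inv g \<in> S" using conj_setI[OF h, of g] by (simp add: eq_commute)
qed

lemma frattini_argument:
  assumes s: "prime s" and K: "K \<lhd> G"
    and Q: "subgroup Q G" "Q \<subseteq> K" "card Q = s ^ multiplicity s (card K)"
  shows "K <#> normalizer G Q = carrier G"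
proof
  have Ksub: "K \<subseteq> carrier G" using subgroup.subset[OF normal_imp_subgroup[OF K]] .
  show "K <#> normalizer G Q \<subseteq> carrier G"
    using set_mult_closed[OF Ksub subgroup.subset[OF normalizer_imp_subgroup]] subgroup.subset[OF Q(1)]
    by blast
  show "carrier G \<subseteq> K <#> normalizer G Q"
  proof
    fix y assume y: "y \<in> carrier G"
    have Qsub: "Q \<subseteq> carrier G" using subgroup.subset[OF Q(1)] .
    have "conj_set G y Q \<subseteq> K" using conj_set_mono[OF Q(2)] normal_conj_set[OF K y] by blast
    moreover have "card (conj_set G y Q) = s ^ multiplicity s (card K)"
      using card_conj_set[OF y Qsub] Q(3) by simp
    ultimately obtain c where c: "c \<in> K" "conj_set G y Q = conj_set G c Q"
      using sylow_subgroups_conjugate_in_subgroup[OF s normal_imp_subgroup[OF K] Q subgroup_conj_set[OF Q(1) y]]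
      by blast
    have cc: "c \<in> carrier G" using c(1) Ksub by blast
    have "conj_set G (inv c \<otimes> y) Q = Q"
      using conj_set_mult[OF inv_closed[OF cc] y Qsub] c(2) conj_set_inv_cancel[OF cc Qsub] by simp
    then have "inv c \<otimes> y \<in> normalizer G Q" using normalizer_iff[OF Qsub] cc y by simp
    moreover have "y = c \<otimes> (inv c \<otimes> y)" using cc y by simp
    ultimately show "y \<in> K <#> normalizer G Q" unfolding set_mult_def using c(1) by blast
  qed
qed

lemma mem_normal_subgroup_if_coprime_index:
  assumes K: "K \<lhd> G" and x: "x \<in> carrier G" and index: "order G = card K * n"
    and coprime: "coprime (ord x) n"
  shows "x \<in> K"
proof -
  define C where "C = generate G {x}"
  have C: "subgroup C G" "x \<in> C" "card C = ord x"
    unfolding C_def using generate_is_subgroup[of "{x}"] x generate.incl[of x "{x}" G]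
      generate_pow_card[OF x] by auto
  have sK: "subgroup K G" using normal_imp_subgroup[OF K] .
  obtain t where t: "order G = card (K <#> C) * t"
    using card_subgroup_dvd_order[OF mult_norm_subgroup[OF K C(1)]] by blast
  have "card K * (card C * t) = card K * (n * card (K \<inter> C))"
    using card_set_mult_Int[OF sK C(1)] index t by (metis mult.assoc mult.commute)
  then have "n * card (K \<inter> C) = card C * t"
    using card_subgroup_pos[OF sK] by (simp add: mult.commute)
  then have "card C dvd n * card (K \<inter> C)" by simp
  then have "card C dvd card (K \<inter> C)"
    using coprime_dvd_mult_right_iff[of "card C" n "card (K \<inter> C)"] coprime C(3) by simp
  moreover have "0 < card (K \<inter> C)"
    using finite_subgroup[OF C(1)] subgroup.one_closed[OF sK] subgroup.one_closed[OF C(1)]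
    by (simp add: card_gt_0_iff) blast
  ultimately have "card C \<le> card (K \<inter> C)" by (simp add: dvd_imp_le)
  then have "K \<inter> C = C" using finite_subgroup[OF C(1)] by (meson Int_lower2 card_seteq)
  then show ?thesis using C(2) by blast
qed

lemma multiplicity_card_complement:
  assumes "subgroup K G" "card K * p ^ m = order G" "prime s" "prime p" "s \<noteq> p"
  shows "multiplicity s (card K) = multiplicity s (order G)"
  using multiplicity_mult_prime_power_other[OF assms(3-5)] card_subgroup_pos[OF assms(1)] assms(2)
  by (metis less_not_refl2)

lemma normalizer_contains_conj_sylow:
  assumes p: "prime p" and P: "sylow_subgroup G p P"
    and K: "K \<lhd> G" "card K * card P = order G"
    and s: "prime s" and Q: "subgroup Q G" "Q \<subseteq> K" "card Q = s ^ multiplicity s (card K)"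
  shows "\<exists>h\<in>carrier G. conj_set G h P \<subseteq> normalizer G Q"
proof -
  define N where "N = normalizer G Q"
  have sK: "subgroup K G" using normal_imp_subgroup[OF K(1)] .
  have sN: "subgroup N G" unfolding N_def using normalizer_imp_subgroup[OF subgroup.subset[OF Q(1)]] .
  have "card K * card P * card (K \<inter> N) = card K * card N"
    using card_set_mult_Int[OF sK sN] frattini_argument[OF s K(1) Q] K(2)
    unfolding N_def order_def by simp
  then have "card P * card (K \<inter> N) = card N" using card_subgroup_pos[OF sK] by (simp add: mult.assoc)
  then have "p ^ multiplicity p (order G) dvd card N"
    using P unfolding sylow_subgroup_def by (metis dvd_triv_left)
  then have "multiplicity p (card N) = multiplicity p (order G)"
    using multiplicity_card_subgroup_eq[OF p sN] by simp
  moreover obtain P' where P': "subgroup P' G" "P' \<subseteq> N" "card P' = p ^ multiplicity p (card N)"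
    using sylow_subgroup_of_subgroup_exists[OF sN p] by blast
  ultimately have "sylow_subgroup G p P'" unfolding sylow_subgroup_def by simp
  then obtain h where "h \<in> carrier G" "P' = conj_set G h P"
    using sylow_subgroups_conjugate[OF p P] by blast
  then show ?thesis using P'(2) unfolding N_def by blast
qed

end

section \<open>The transfer and Burnside's normal complement theorem\<close>

lemma (in group) inj_on_pow_coprime:
  assumes P: "subgroup P G" "abelian_set G P" and n: "coprime n (card P)"
  shows "inj_on (\<lambda>u. u [^] n) P"
proof (rule inj_onI)
  fix u v assume u: "u \<in> P" and v: "v \<in> P" and eq: "u [^] n = v [^] n"
  interpret PG: group "G\<lparr>carrier := P\<rparr>" using subgroup_imp_group[OF P(1)] .
  have c: "u \<in> carrier G" "v \<in> carrier G" using u v subgroup.subset[OF P(1)] by auto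
  define w where "w = u \<otimes> inv v"
  have wP: "w \<in> P" unfolding w_def using u v P(1) by (simp add: subgroup.m_closed subgroup.m_inv_closed)
  have wc: "w \<in> carrier G" using c unfolding w_def by simp
  have "u \<otimes> inv v = inv v \<otimes> u"
    using P u v subgroup.m_inv_closed unfolding abelian_set_def by metis
  then have "w [^] n = u [^] n \<otimes> inv (v [^] n)"
    unfolding w_def using pow_mult_distrib c by (simp add: nat_pow_inv)
  then have "ord w dvd n" using eq c pow_eq_id[OF wc] by simp
  moreover have "w [^] card P = \<one>"
    using PG.pow_order_eq_1[of w] wP by (simp add: order_def nat_pow_consistent[symmetric])
  then have "ord w dvd card P" using pow_eq_id[OF wc] by simp
  ultimately have "ord w = 1" using n by (metis coprime_common_divisor_nat)
  then have "w = \<one>" using ord_eq_1[OF wc] by simp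
  then show "u = v" unfolding w_def using c by (metis inv_closed inv_equality m_closed r_inv)
qed

locale abelian_subgroup_transfer = finite_group +
  fixes P
  assumes subgroup_P: "subgroup P G" and abelian_P: "abelian_set G P"
begin

abbreviation PG where "PG \<equiv> G\<lparr>carrier := P\<rparr>"

sublocale PG: comm_group PG
proof -
  interpret PG0: group PG using subgroup_imp_group[OF subgroup_P] .
  show "comm_group PG" by (rule PG0.group_comm_groupI) (use abelian_P in \<open>auto simp: abelian_set_def\<close>)
qed

definition rep :: "'a set \<Rightarrow> 'a" where
  "rep C = (SOME r. r \<in> C)"

definition transfer_factor :: "'a \<Rightarrow> 'a set \<Rightarrow> 'a" where
  "transfer_factor g C = rep C \<otimes> g \<otimes> inv (rep (C #> g))"

definition transfer_map :: "'a \<Rightarrow> 'a" where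
  "transfer_map g = finprod PG (transfer_factor g) (rcosets P)"

lemma P_subset: "P \<subseteq> carrier G"
  using subgroup.subset[OF subgroup_P] .

lemma finite_rcosets: "finite (rcosets P)"
  using finite_subset[OF rcosets_subset_PowG[OF subgroup_P]] by simp

lemma rcosets_carrier: "C \<in> rcosets P \<Longrightarrow> C \<subseteq> carrier G"
  using subgroup.rcosets_carrier[OF subgroup_P is_group] by blast

lemma rep_in: "C \<in> rcosets P \<Longrightarrow> rep C \<in> C"
  unfolding rep_def RCOSETS_def by (rule someI_ex) (auto intro: rcos_self[OF _ subgroup_P])

lemma rep_carrier: "C \<in> rcosets P \<Longrightarrow> rep C \<in> carrier G"
  using rep_in rcosets_carrier by blast

lemma rcosets_mult: "C \<in> rcosets P \<Longrightarrow> g \<in> carrier G \<Longrightarrow> C #> g \<in> rcosets P"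
  unfolding RCOSETS_def by (auto simp: coset_mult_assoc P_subset)

lemma rcosets_assoc: "C \<in> rcosets P \<Longrightarrow> g \<in> carrier G \<Longrightarrow> h \<in> carrier G \<Longrightarrow> C #> g #> h = C #> (g \<otimes> h)"
  using coset_mult_assoc rcosets_carrier by blast

lemma rcosets_one: "C \<in> rcosets P \<Longrightarrow> C #> \<one> = C"
  using coset_mult_one rcosets_carrier by blast

lemma rcosets_cancel:
  assumes "D \<in> rcosets P" "D' \<in> rcosets P" "c \<in> carrier G" "D #> c = D' #> c"
  shows "D = D'"
  using assms rcosets_assoc[of _ c "inv c"] rcosets_one by (metis inv_closed r_inv)

lemma rcosets_pow_Suc:
  "C \<in> rcosets P \<Longrightarrow> u \<in> carrier G \<Longrightarrow> C #> u [^] Suc i = C #> u [^] i #> u"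
  using rcosets_assoc by simp

lemma rcosets_pow_add:
  assumes "C \<in> rcosets P" "u \<in> carrier G"
  shows "C #> u [^] (i + j :: nat) = C #> u [^] i #> u [^] j"
proof -
  have "C #> u [^] i #> u [^] j = C #> (u [^] i \<otimes> u [^] j)" using assms by (simp add: rcosets_assoc)
  then show ?thesis using assms by (simp add: nat_pow_mult)
qed

lemma bij_rcosets_mult: "g \<in> carrier G \<Longrightarrow> bij_betw (\<lambda>C. C #> g) (rcosets P) (rcosets P)"
  by (rule bij_betwI[where g = "\<lambda>C. C #> inv g"]) (auto simp: rcosets_mult rcosets_assoc rcosets_one)

lemma div_in_same_rcoset: "C \<in> rcosets P \<Longrightarrow> a \<in> C \<Longrightarrow> b \<in> C \<Longrightarrow> a \<otimes> inv b \<in> P"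
proof -
  assume C: "C \<in> rcosets P" and ab: "a \<in> C" "b \<in> C"
  obtain c where c: "c \<in> carrier G" "C = P #> c" using C unfolding RCOSETS_def by auto
  have "P #> b = C" using repr_independence[OF _ c(1) subgroup_P] ab c by simp
  then show ?thesis
    using subgroup.rcos_module_imp[OF subgroup_P is_group] ab rcosets_carrier[OF C] by blast
qed

lemma transfer_factor_in: "C \<in> rcosets P \<Longrightarrow> g \<in> carrier G \<Longrightarrow> transfer_factor g C \<in> P"
proof -
  assume C: "C \<in> rcosets P" and g: "g \<in> carrier G"
  have "rep C \<otimes> g \<in> C #> g" using rep_in[OF C] unfolding r_coset_def by auto
  moreover have "rep (C #> g) \<in> C #> g" using rep_in rcosets_mult C g by blast
  ultimately show ?thesis unfolding transfer_factor_def
    using div_in_same_rcoset[OF rcosets_mult[OF C g]] by (simp add: m_assoc)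
qed

lemma transfer_factor_mult:
  assumes C: "C \<in> rcosets P" and g: "g \<in> carrier G" and h: "h \<in> carrier G"
  shows "transfer_factor (g \<otimes> h) C = transfer_factor g C \<otimes> transfer_factor h (C #> g)"
proof -
  have c: "rep C \<in> carrier G" "rep (C #> g) \<in> carrier G" "rep (C #> g #> h) \<in> carrier G"
    using rep_carrier rcosets_mult C g h by auto
  show ?thesis
    unfolding transfer_factor_def using c g h rcosets_assoc[OF C g h] by (simp add: m_assoc)
qed

lemma transfer_map_in: "g \<in> carrier G \<Longrightarrow> transfer_map g \<in> P"
  unfolding transfer_map_def using PG.finprod_closed[of "transfer_factor g"] transfer_factor_in by auto

lemma transfer_map_mult:
  assumes g: "g \<in> carrier G" and h: "h \<in> carrier G"
  shows "transfer_map (g \<otimes> h) = transfer_map g \<otimes> transfer_map h"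
proof -
  have "transfer_map (g \<otimes> h)
      = finprod PG (\<lambda>C. transfer_factor g C \<otimes>\<^bsub>PG\<^esub> transfer_factor h (C #> g)) (rcosets P)"
    unfolding transfer_map_def using transfer_factor_mult g h
    by (intro PG.finprod_cong') (auto intro!: subgroup.m_closed[OF subgroup_P] transfer_factor_in rcosets_mult)
  also have "\<dots> = transfer_map g \<otimes>\<^bsub>PG\<^esub> finprod PG (\<lambda>C. transfer_factor h (C #> g)) (rcosets P)"
    unfolding transfer_map_def
    by (rule PG.finprod_multf) (auto intro!: transfer_factor_in rcosets_mult g h)
  also have "finprod PG (\<lambda>C. transfer_factor h (C #> g)) (rcosets P) = transfer_map h"
    unfolding transfer_map_def using bij_rcosets_mult[OF g] transfer_factor_in h
    by (subst PG.finprod_reindex[symmetric]) (auto simp: bij_betw_def)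
  finally show ?thesis by simp
qed

lemma transfer_map_hom: "transfer_map \<in> hom G PG"
  by (rule homI) (auto simp: transfer_map_in transfer_map_mult)

lemma finprod_transfer_factor_telescope:
  assumes C: "C \<in> rcosets P" and u: "u \<in> carrier G"
  shows "finprod PG (\<lambda>i::nat. transfer_factor u (C #> u [^] i)) {..<m}
       = rep C \<otimes> u [^] m \<otimes> inv (rep (C #> u [^] m))"
proof (induction m)
  case 0
  show ?case using rep_carrier[OF C] rcosets_one[OF C] by simp
next
  case (Suc m)
  let ?D = "C #> u [^] m"
  have D: "?D \<in> rcosets P" using rcosets_mult[OF C] u by simp
  have c: "rep C \<in> carrier G" "rep ?D \<in> carrier G" "rep (?D #> u) \<in> carrier G"
    using rep_carrier C D rcosets_mult u by auto
  have f: "transfer_factor u ?D \<in> P" using transfer_factor_in[OF D u] .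
  have fs: "finprod PG (\<lambda>i::nat. transfer_factor u (C #> u [^] i)) {..<m} \<in> P"
    using transfer_factor_in rcosets_mult[OF C] u by (intro PG.finprod_closed[simplified]) auto
  have "finprod PG (\<lambda>i::nat. transfer_factor u (C #> u [^] i)) {..<Suc m}
      = transfer_factor u ?D \<otimes> finprod PG (\<lambda>i::nat. transfer_factor u (C #> u [^] i)) {..<m}"
    unfolding lessThan_Suc
    using PG.finprod_insert[of "{..<m}" m "\<lambda>i::nat. transfer_factor u (C #> u [^] i)"]
      transfer_factor_in rcosets_mult[OF C] u by auto
  also have "\<dots> = finprod PG (\<lambda>i::nat. transfer_factor u (C #> u [^] i)) {..<m} \<otimes> transfer_factor u ?D"
    using PG.m_comm[of "transfer_factor u ?D"] f fs by simp
  also have "\<dots> = rep C \<otimes> u [^] m \<otimes> inv (rep ?D) \<otimes> transfer_factor u ?D"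
    by (simp only: Suc.IH)
  also have "\<dots> = rep C \<otimes> u [^] m \<otimes> (inv (rep ?D) \<otimes> rep ?D) \<otimes> u \<otimes> inv (rep (?D #> u))"
    unfolding transfer_factor_def using c u by (simp add: m_assoc)
  also have "\<dots> = rep C \<otimes> u [^] Suc m \<otimes> inv (rep (C #> u [^] Suc m))"
    using c u rcosets_pow_Suc[OF C u] by (simp add: m_assoc)
  finally show ?case .
qed

lemma rcoset_cycle:
  assumes C: "C \<in> rcosets P" and u: "u \<in> carrier G"
  obtains k where "0 < k" "C #> u [^] k = C" "inj_on (\<lambda>i::nat. C #> u [^] i) {..<k}"
proof -
  define k where "k = (LEAST k::nat. 0 < k \<and> C #> u [^] k = C)"
  have "0 < ord u \<and> C #> u [^] ord u = C" using ord_ge_1[OF finite_carrier u] rcosets_one[OF C] u by simp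
  then have k: "0 < k" "C #> u [^] k = C"
    using LeastI_ex[of "\<lambda>k::nat. 0 < k \<and> C #> u [^] k = C"] unfolding k_def by blast+
  have no_return: "C #> u [^] j \<noteq> C" if "0 < j" "j < k" for j :: nat
    using not_less_Least[of j "\<lambda>k::nat. 0 < k \<and> C #> u [^] k = C"] that unfolding k_def by blast
  have "C #> u [^] i \<noteq> C #> u [^] j" if "i < j" "j < k" for i j :: nat
  proof
    assume "C #> u [^] i = C #> u [^] j"
    then have "C #> u [^] (j - i) #> u [^] i = C #> u [^] i"
      using that rcosets_pow_add[OF C u, of "j - i" i] by simp
    then have "C #> u [^] (j - i) = C"
      using rcosets_cancel[OF rcosets_mult[OF C] C, of _ "u [^] i"] u by simp
    then show False using no_return[of "j - i"] that by simp
  qed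
  then have "inj_on (\<lambda>i::nat. C #> u [^] i) {..<k}"
    by (intro inj_onI) (metis lessThan_iff linorder_neqE_nat)
  then show ?thesis using k that by blast
qed

lemma rcoset_cycle_pred:
  assumes C: "C \<in> rcosets P" and u: "u \<in> carrier G" and k: "0 < k" "C #> u [^] k = C"
    and D: "D \<in> rcosets P" "D #> u \<in> (\<lambda>i::nat. C #> u [^] i) ` {..<k}"
  shows "D \<in> (\<lambda>i::nat. C #> u [^] i) ` {..<k}"
proof -
  obtain i where i: "i < k" "D #> u = C #> u [^] i" using D(2) by auto
  obtain j :: nat where "j < k" "C #> u [^] i = C #> u [^] j #> u"
  proof (cases i)
    case 0
    then have "C #> u [^] i = C #> u [^] (k - 1) #> u"
      using k rcosets_pow_Suc[OF C u, of "k - 1"] rcosets_one[OF C] by simp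
    then show ?thesis using that[of "k - 1"] k(1) by simp
  next
    case (Suc i')
    then show ?thesis using that[of i'] i(1) rcosets_pow_Suc[OF C u] by simp
  qed
  then have "D = C #> u [^] j" using rcosets_cancel[OF D(1) rcosets_mult[OF C] u, of "u [^] j"] i(2) u by simp
  then show ?thesis using \<open>j < k\<close> by blast
qed

lemma normal_complement_if_transfer_onto:
  assumes onto: "transfer_map ` carrier G = P"
  shows "\<exists>K. K \<lhd> G \<and> card K * card P = order G"
proof -
  have hom: "group_hom G PG transfer_map"
    by (intro group_hom.intro group_hom_axioms.intro is_group PG.is_group transfer_map_hom)
  define K where "K = kernel G PG transfer_map"
  have K: "K \<lhd> G" unfolding K_def using group_hom.normal_kernel[OF hom] .
  have "G Mod K \<cong> PG" unfolding K_def using group_hom.FactGroup_iso[OF hom] onto by simp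
  then have "card (rcosets K) = card P" using iso_same_card by (fastforce simp: FactGroup_def)
  then have "card K * card P = order G"
    using lagrange[OF normal_imp_subgroup[OF K]] by (simp add: mult.commute)
  then show ?thesis using K by blast
qed

end

locale fusion_free_transfer = abelian_subgroup_transfer +
  assumes conj_in_subgroup_eq:
    "\<And>w g. w \<in> P \<Longrightarrow> g \<in> carrier G \<Longrightarrow> g \<otimes> w \<otimes> inv g \<in> P \<Longrightarrow> g \<otimes> w \<otimes> inv g = w"
begin

lemma finprod_transfer_factor_cycle:
  assumes C: "C \<in> rcosets P" and u: "u \<in> P"
    and k: "C #> u [^] k = C" "inj_on (\<lambda>i::nat. C #> u [^] i) {..<k}"
  shows "finprod PG (transfer_factor u) ((\<lambda>i::nat. C #> u [^] i) ` {..<k}) = u [^] k"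
proof -
  have uc: "u \<in> carrier G" using u P_subset by blast
  have "finprod PG (transfer_factor u) ((\<lambda>i::nat. C #> u [^] i) ` {..<k})
      = finprod PG (\<lambda>i::nat. transfer_factor u (C #> u [^] i)) {..<k}"
    using k(2) transfer_factor_in rcosets_mult[OF C] uc by (intro PG.finprod_reindex) auto
  also have "\<dots> = rep C \<otimes> u [^] k \<otimes> inv (rep C)"
    using finprod_transfer_factor_telescope[OF C uc, of k] k(1) by simp
  also have "\<dots> = u [^] k"
  proof (rule conj_in_subgroup_eq)
    show "u [^] k \<in> P" using PG.nat_pow_closed[of u k] u by (simp add: nat_pow_consistent[symmetric])
    show "rep C \<in> carrier G" using rep_carrier[OF C] .
    have "finprod PG (\<lambda>i::nat. transfer_factor u (C #> u [^] i)) {..<k} \<in> P"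
      using transfer_factor_in rcosets_mult[OF C] uc by (intro PG.finprod_closed[simplified]) auto
    then show "rep C \<otimes> u [^] k \<otimes> inv (rep C) \<in> P"
      using finprod_transfer_factor_telescope[OF C uc, of k] k(1) by simp
  qed
  finally show ?thesis .
qed

(* Induction over the <u>-orbits in S: along an orbit of length k the factors telescope to a
   conjugate of u^k that lies in P, hence equals u^k. *)
lemma finprod_transfer_factor_invariant:
  assumes u: "u \<in> P"
  shows "S \<subseteq> rcosets P \<Longrightarrow> (\<And>D. D \<in> S \<Longrightarrow> D #> u \<in> S) \<Longrightarrow>
    finprod PG (transfer_factor u) S = u [^] card S"
proof (induction "card S" arbitrary: S rule: less_induct)
  case less
  have uc: "u \<in> carrier G" using u P_subset by blast
  have finS: "finite S" using less.prems(1) finite_rcosets finite_subset by blast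
  show ?case
  proof (cases "S = {}")
    case False
    then obtain C where CS: "C \<in> S" by blast
    have C: "C \<in> rcosets P" using CS less.prems(1) by blast
    obtain k where k: "0 < k" "C #> u [^] k = C" "inj_on (\<lambda>i::nat. C #> u [^] i) {..<k}"
      using rcoset_cycle[OF C uc] by blast
    define Orb where "Orb = (\<lambda>i::nat. C #> u [^] i) ` {..<k}"
    have "C #> u [^] i \<in> S" for i :: nat
      by (induction i) (use CS rcosets_one[OF C] less.prems(2) rcosets_pow_Suc[OF C uc] in auto)
    then have OS: "Orb \<subseteq> S" unfolding Orb_def by auto
    have "C \<in> Orb" unfolding Orb_def using k(1) rcosets_one[OF C] by (auto intro: image_eqI[of _ _ 0])
    then have "S - Orb \<subset> S" using CS by blast
    then have "card (S - Orb) < card S" using psubset_card_mono[OF finS] by blast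
    moreover have "S - Orb \<subseteq> rcosets P" using less.prems(1) by blast
    moreover have "D #> u \<in> S - Orb" if "D \<in> S - Orb" for D
      using that less.prems rcoset_cycle_pred[OF C uc k(1,2)] unfolding Orb_def by blast
    ultimately have rest: "finprod PG (transfer_factor u) (S - Orb) = u [^] card (S - Orb)"
      using less.hyps by blast
    have finO: "finite Orb" using finite_subset[OF OS finS] .
    have "transfer_factor u \<in> S \<rightarrow> P" using transfer_factor_in less.prems(1) uc by blast
    then have "finprod PG (transfer_factor u) (Orb \<union> (S - Orb))
        = finprod PG (transfer_factor u) Orb \<otimes> finprod PG (transfer_factor u) (S - Orb)"
      using PG.finprod_Un_disjoint[of Orb "S - Orb" "transfer_factor u"] finS finO OS by auto
    also have "\<dots> = u [^] card Orb \<otimes> u [^] card (S - Orb)"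
      using finprod_transfer_factor_cycle[OF C u k(2,3)] rest card_image[OF k(3)]
      unfolding Orb_def by simp
    also have "\<dots> = u [^] (card Orb + card (S - Orb))" using uc by (simp add: nat_pow_mult)
    also have "card Orb + card (S - Orb) = card S"
      using card_Diff_subset[OF finO OS] card_mono[OF finS OS] by simp
    finally show ?thesis using OS by (simp add: Un_absorb1)
  qed simp
qed

lemma transfer_map_eval: "u \<in> P \<Longrightarrow> transfer_map u = u [^] card (rcosets P)"
  unfolding transfer_map_def
  using finprod_transfer_factor_invariant[OF _ subset_refl] rcosets_mult P_subset by blast

lemma transfer_map_onto:
  assumes coprime: "coprime (card (rcosets P)) (card P)"
  shows "transfer_map ` carrier G = P"
proof
  show "transfer_map ` carrier G \<subseteq> P" using transfer_map_in by auto
  have "card ((\<lambda>u. u [^] card (rcosets P)) ` P) = card P"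
    using card_image[OF inj_on_pow_coprime[OF subgroup_P abelian_P coprime]] .
  moreover have "(\<lambda>u. u [^] card (rcosets P)) ` P \<subseteq> P"
    using PG.nat_pow_closed by (auto simp: nat_pow_consistent[symmetric])
  ultimately have pow_onto: "(\<lambda>u. u [^] card (rcosets P)) ` P = P"
    using card_subset_eq[OF finite_subset[OF P_subset]] by simp
  show "P \<subseteq> transfer_map ` carrier G"
  proof
    fix u assume "u \<in> P"
    then obtain v where v: "v \<in> P" "u = v [^] card (rcosets P)" using pow_onto by auto
    then have "u = transfer_map v" using transfer_map_eval by simp
    then show "u \<in> transfer_map ` carrier G" using v(1) P_subset by blast
  qed
qed

end

context finite_group
begin

lemma sylow_conj_by_centralizing_elem:
  assumes p: "prime p" and P: "sylow_subgroup G p P" "abelian_set G P"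
    and w: "w \<in> P" and g: "g \<in> carrier G" and y: "g \<otimes> w \<otimes> inv g \<in> P"
  shows "\<exists>c\<in>centralizer G {g \<otimes> w \<otimes> inv g}. conj_set G g P = conj_set G c P"
proof -
  define Cy where "Cy = centralizer G {g \<otimes> w \<otimes> inv g}"
  have sP: "subgroup P G" using P unfolding sylow_subgroup_def by blast
  have Psub: "P \<subseteq> carrier G" using subgroup.subset[OF sP] .
  have sCy: "subgroup Cy G" unfolding Cy_def using subgroup_centralizer w g Psub by auto
  have PCy: "P \<subseteq> Cy" unfolding Cy_def using abelian_set_subset_centralizer[OF P(2) Psub] y by simp
  have P'Cy: "conj_set G g P \<subseteq> Cy" unfolding Cy_def
    using abelian_set_subset_centralizer[OF abelian_set_conj_set[OF P(2) Psub g]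
        subgroup.subset[OF subgroup_conj_set[OF sP g]]] conj_setI[OF w, of g] by simp
  have "multiplicity p (card Cy) = multiplicity p (order G)"
    using multiplicity_card_subgroup_eq[OF p sCy] card_subgroup_dvd[OF sP sCy PCy] P
    unfolding sylow_subgroup_def by simp
  then have card_P: "card P = p ^ multiplicity p (card Cy)" using P unfolding sylow_subgroup_def by simp
  have "card (conj_set G g P) = p ^ multiplicity p (card Cy)" using card_conj_set[OF g Psub] card_P by simp
  then show ?thesis
    using sylow_subgroups_conjugate_in_subgroup[OF p sCy sP PCy card_P subgroup_conj_set[OF sP g] P'Cy]
    unfolding Cy_def by blast
qed

lemma abelian_normalizer_sylow_fusion:
  assumes p: "prime p" and P: "sylow_subgroup G p P" and ab: "abelian_set G (normalizer G P)"
    and w: "w \<in> P" and g: "g \<in> carrier G" and y: "g \<otimes> w \<otimes> inv g \<in> P"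
  shows "g \<otimes> w \<otimes> inv g = w"
proof -
  define y where "y = g \<otimes> w \<otimes> inv g"
  have sP: "subgroup P G" using P unfolding sylow_subgroup_def by blast
  have Psub: "P \<subseteq> carrier G" using subgroup.subset[OF sP] .
  have PN: "P \<subseteq> normalizer G P" using subgroup_subset_normalizer[OF sP] .
  have wc: "w \<in> carrier G" "y \<in> carrier G" using w g Psub unfolding y_def by auto
  obtain c where c: "c \<in> centralizer G {y}" "conj_set G g P = conj_set G c P"
    using sylow_conj_by_centralizing_elem[OF p P abelian_set_subset[OF ab PN] w g y] unfolding y_def by blast
  have cc: "c \<in> carrier G" and cy: "c \<otimes> y = y \<otimes> c" using c(1) unfolding centralizer_def by auto
  define n where "n = inv c \<otimes> g"
  have nc: "n \<in> carrier G" unfolding n_def using cc g by simp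
  have "conj_set G n P = P"
    unfolding n_def using conj_set_mult[OF inv_closed[OF cc] g Psub] c(2) conj_set_inv_cancel[OF cc Psub]
    by simp
  then have "n \<in> normalizer G P" using normalizer_iff[OF Psub] nc by simp
  then have comm: "n \<otimes> w = w \<otimes> n" using ab PN w unfolding abelian_set_def by blast
  have "w = w \<otimes> n \<otimes> inv n" using nc wc by (simp add: m_assoc)
  also have "\<dots> = n \<otimes> w \<otimes> inv n" using comm by simp
  also have "\<dots> = inv c \<otimes> y \<otimes> c"
    unfolding n_def y_def using cc g wc by (simp add: m_assoc inv_mult_group)
  also have "\<dots> = inv c \<otimes> (c \<otimes> y)" using cy cc wc by (simp add: m_assoc)
  also have "\<dots> = y" using cc wc by simp
  finally show ?thesis unfolding y_def by simp
qed

theorem burnside_normal_complement: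
  assumes p: "prime p" and P: "sylow_subgroup G p P" and ab: "abelian_set G (normalizer G P)"
  shows "\<exists>K. K \<lhd> G \<and> card K * card P = order G"
proof -
  have sP: "subgroup P G" using P unfolding sylow_subgroup_def by blast
  have "abelian_set G P" using abelian_set_subset[OF ab subgroup_subset_normalizer[OF sP]] .
  then interpret T: fusion_free_transfer G P
    using finite_group_axioms sP abelian_normalizer_sylow_fusion[OF p P ab]
    by (simp add: fusion_free_transfer_def fusion_free_transfer_axioms_def
        abelian_subgroup_transfer_def abelian_subgroup_transfer_axioms_def)
  have "coprime p (card (rcosets P))" using prime_imp_coprime[OF p] sylow_index_not_dvd[OF p P] by blast
  then have "coprime (card (rcosets P)) (card P)" using P unfolding sylow_subgroup_def by (simp add: coprime_commute)
  then show ?thesis using T.normal_complement_if_transfer_onto T.transfer_map_onto by blast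
qed

end

section \<open>Exponent-critical groups\<close>

context finite_group
begin

lemma exists_elem_ord_prime_power_exponent:
  assumes q: "prime q"
  shows "\<exists>x\<in>carrier G. ord x = q ^ multiplicity q (group_exponent G)"
proof -
  have ord_pos: "0 \<notin> ord ` carrier G" using ord_ge_1[OF finite_carrier] by force
  obtain g where g: "g \<in> carrier G" "multiplicity q (group_exponent G) = multiplicity q (ord g)"
    using multiplicity_Lcm_attained[of "ord ` carrier G" q] ord_pos q
    unfolding group_exponent_def set_exponent_def by auto
  define m where "m = multiplicity q (ord g)"
  obtain t where t: "ord g = q ^ m * t" unfolding m_def using multiplicity_dvd by blast
  have "t \<noteq> 0" using t ord_ge_1[OF finite_carrier g(1)] by (intro notI) simp
  then have "ord (g [^] t) = q ^ m" using ord_pow[OF g(1), of t] t by simp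
  then show ?thesis using g unfolding m_def by (metis nat_pow_closed)
qed

lemma exponent_critical_witness:
  assumes "exponent_critical G"
  obtains x q k where "x \<in> carrier G" "prime q" "ord x = q ^ k"
    "\<And>H. subgroup H G \<Longrightarrow> x \<in> H \<Longrightarrow> H \<noteq> carrier G \<Longrightarrow> abelian_set G H"
proof -
  define L where
    "L = Lcm {set_exponent G H | H. subgroup H G \<and> H \<noteq> carrier G \<and> nonabelian_set G H}"
  have "L dvd group_exponent G"
    unfolding L_def
  proof (rule Lcm_least)
    fix b assume "b \<in> {set_exponent G H | H. subgroup H G \<and> H \<noteq> carrier G \<and> nonabelian_set G H}"
    then obtain H where "b = set_exponent G H" "subgroup H G" by blast
    then show "b dvd group_exponent G"
      unfolding group_exponent_def set_exponent_def by (simp add: Lcm_subset image_mono subgroup.subset)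
  qed
  moreover have "0 \<notin> ord ` carrier G" using ord_ge_1[OF finite_carrier] by force
  then have "group_exponent G \<noteq> 0"
    using Lcm_0_iff[of "ord ` carrier G"] unfolding group_exponent_def set_exponent_def by simp
  moreover have "L \<noteq> group_exponent G" using assms unfolding exponent_critical_def L_def by simp
  ultimately obtain q where q: "prime q" "\<not> q ^ multiplicity q (group_exponent G) dvd L"
    using prime_power_not_dvd_proper_divisor by blast
  obtain x where x: "x \<in> carrier G" "ord x = q ^ multiplicity q (group_exponent G)"
    using exists_elem_ord_prime_power_exponent[OF q(1)] by blast
  have "abelian_set G H" if H: "subgroup H G" "x \<in> H" "H \<noteq> carrier G" for H
  proof (rule ccontr)
    assume "\<not> abelian_set G H"
    then have "set_exponent G H \<in> {set_exponent G H | H. subgroup H G \<and> H \<noteq> carrier G \<and> nonabelian_set G H}"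
      using H unfolding abelian_set_def nonabelian_set_def by blast
    then have "set_exponent G H dvd L" unfolding L_def by (rule dvd_Lcm)
    moreover have "ord x dvd set_exponent G H" unfolding set_exponent_def using H(2) by simp
    ultimately show False using q(2) x(2) dvd_trans by metis
  qed
  then show ?thesis using that x q(1) by blast
qed

end

locale critical_element = finite_group +
  fixes x and p :: nat and k :: nat
  assumes x_carrier: "x \<in> carrier G"
    and prime_p: "prime p"
    and ord_x: "ord x = p ^ k"
    and overgroup_abelian: "\<And>H. subgroup H G \<Longrightarrow> x \<in> H \<Longrightarrow> H \<noteq> carrier G \<Longrightarrow> abelian_set G H"
    and four_primes: "4 \<le> card (prime_factors (order G))"
begin

definition cyclic_x where "cyclic_x = generate G {x}"

lemma cyclic_x: "subgroup cyclic_x G" "x \<in> cyclic_x" "card cyclic_x = p ^ k"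
  unfolding cyclic_x_def using generate_is_subgroup[of "{x}"] x_carrier generate.incl[of x "{x}" G]
    generate_pow_card[OF x_carrier] ord_x by auto

lemma small_overgroup_abelian:
  assumes H: "subgroup H G" "x \<in> H"
    and card_H: "card H dvd a ^ i * b ^ j * c ^ l" and primes: "prime a" "prime b" "prime c"
  shows "abelian_set G H"
proof (rule overgroup_abelian[OF H])
  show "H \<noteq> carrier G"
  proof
    assume "H = carrier G"
    then have "prime_factors (order G) \<subseteq> {a, b, c}"
      using prime_factors_subset_if_dvd_prime_powers[OF card_H primes] by (simp add: order_def)
    then have "card (prime_factors (order G)) \<le> card {a, b, c}" by (simp add: card_mono)
    also have "\<dots> \<le> 3" by (simp add: card_insert_le_m1)
    finally show False using four_primes by simp
  qed
qed

lemma small_overgroup_abelian_two_primes: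
  assumes "subgroup H G" "x \<in> H" "card H dvd a ^ i * b ^ j" "prime a" "prime b"
  shows "abelian_set G H"
  using small_overgroup_abelian[of H a i b j b 0] assms by simp

lemma subset_centralizer_if_abelian_overgroup:
  assumes "abelian_set G H" "subgroup H G" "x \<in> H" "S \<subseteq> H"
  shows "S \<subseteq> centralizer G {x}"
  using abelian_set_subset_centralizer[OF assms(1) subgroup.subset[OF assms(2)]] assms(3,4) by blast

lemma sylow_containing_x:
  obtains P where "sylow_subgroup G p P" "x \<in> P" "abelian_set G P"
proof -
  obtain P where P: "sylow_subgroup G p P" "cyclic_x \<subseteq> P"
    using prime_power_subgroup_subset_sylow[OF prime_p cyclic_x(1,3)] by blast
  then have "abelian_set G P"
    using small_overgroup_abelian_two_primes[of P p "multiplicity p (order G)" p 0] cyclic_x(2) prime_p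
    unfolding sylow_subgroup_def by auto
  then show ?thesis using that P cyclic_x(2) by blast
qed

lemma commuting_sylow_if_normal_sylow:
  assumes P: "sylow_subgroup G p P" "x \<in> P" "P \<lhd> G" and s: "prime s"
  shows "\<exists>S. sylow_subgroup G s S \<and> S \<subseteq> centralizer G {x}"
proof -
  obtain S where S: "sylow_subgroup G s S" using sylow_subgroup_exists[OF s] by blast
  have sP: "subgroup P G" and sS: "subgroup S G" using P S unfolding sylow_subgroup_def by auto
  have H: "subgroup (P <#> S) G" using mult_norm_subgroup[OF P(3) sS] .
  have "card (P <#> S) dvd p ^ multiplicity p (order G) * s ^ multiplicity s (order G)"
    using card_set_mult_dvd[OF sP sS] P S unfolding sylow_subgroup_def by simp
  then have "abelian_set G (P <#> S)"
    using small_overgroup_abelian_two_primes[OF H] set_mult_subset_left[OF sP sS] P(2) prime_p s by blast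
  then show ?thesis
    using S subset_centralizer_if_abelian_overgroup[OF _ H] set_mult_subset_left[OF sP sS]
      set_mult_subset_right[OF sP sS] P(2) by blast
qed

lemma commuting_sylow_if_normal_complement:
  assumes P: "sylow_subgroup G p P" "x \<in> P" and K: "K \<lhd> G" "card K * card P = order G"
    and s: "prime s" "s \<noteq> p"
  shows "\<exists>S. sylow_subgroup G s S \<and> S \<subseteq> centralizer G {x}"
proof -
  have sK: "subgroup K G" using normal_imp_subgroup[OF K(1)] .
  obtain Q where Q: "subgroup Q G" "Q \<subseteq> K" "card Q = s ^ multiplicity s (card K)"
    using sylow_subgroup_of_subgroup_exists[OF sK s(1)] by blast
  have Qsub: "Q \<subseteq> carrier G" using subgroup.subset[OF Q(1)] .
  have "multiplicity s (card K) = multiplicity s (order G)"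
    using multiplicity_card_complement[OF sK _ s(1) prime_p s(2)] K(2) P
    unfolding sylow_subgroup_def by simp
  then have card_Q: "card Q = s ^ multiplicity s (order G)" using Q(3) by simp
  obtain h where h: "h \<in> carrier G" "conj_set G h P \<subseteq> normalizer G Q"
    using normalizer_contains_conj_sylow[OF prime_p P(1) K s(1) Q] by blast
  define Q' where "Q' = conj_set G (inv h) Q"
  have sQ': "subgroup Q' G" unfolding Q'_def using subgroup_conj_set[OF Q(1)] h(1) by simp
  have Q'_sylow: "sylow_subgroup G s Q'"
    using sQ' card_conj_set[OF inv_closed[OF h(1)] Qsub] card_Q unfolding Q'_def sylow_subgroup_def by simp
  have "h \<otimes> x \<otimes> inv h \<in> normalizer G Q" using h conj_setI[OF P(2)] by blast
  then have "conj_set G (h \<otimes> x \<otimes> inv h) Q = Q" using normalizer_iff[OF Qsub] by simp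
  moreover have "x \<otimes> inv h = inv h \<otimes> (h \<otimes> x \<otimes> inv h)" using h(1) x_carrier by (simp add: m_assoc)
  ultimately have "conj_set G x Q' = Q'"
    unfolding Q'_def using h(1) x_carrier Qsub
    by (metis conj_set_mult inv_closed m_closed)
  then have "x \<in> normalizer G Q'" using normalizer_iff[OF subgroup.subset[OF sQ']] x_carrier by simp
  then have "cyclic_x \<subseteq> normalizer G Q'"
    unfolding cyclic_x_def using generate_subgroup_incl normalizer_imp_subgroup[OF subgroup.subset[OF sQ']] by simp
  then have H: "subgroup (Q' <#> cyclic_x) G" using subgroup_set_mult_normalizer[OF sQ' cyclic_x(1)] by blast
  have "card (Q' <#> cyclic_x) dvd s ^ multiplicity s (order G) * p ^ k"
    using card_set_mult_dvd[OF sQ' cyclic_x(1)] Q'_sylow cyclic_x(3) unfolding sylow_subgroup_def by simp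
  then have "abelian_set G (Q' <#> cyclic_x)"
    using small_overgroup_abelian_two_primes[OF H] set_mult_subset_right[OF sQ' cyclic_x(1)] cyclic_x(2) prime_p s(1) by blast
  then show ?thesis
    using Q'_sylow subset_centralizer_if_abelian_overgroup[OF _ H] set_mult_subset_left[OF sQ' cyclic_x(1)]
      set_mult_subset_right[OF sQ' cyclic_x(1)] cyclic_x(2) by blast
qed

lemma x_central: "centralizer G {x} = carrier G"
proof -
  obtain P where P: "sylow_subgroup G p P" "x \<in> P" "abelian_set G P" using sylow_containing_x by blast
  have sP: "subgroup P G" using P(1) unfolding sylow_subgroup_def by blast
  show ?thesis
  proof (rule centralizer_eq_carrier_if_sylows)
    fix s assume s: "prime s" "s dvd order G"
    show "\<exists>S. sylow_subgroup G s S \<and> S \<subseteq> centralizer G {x}"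
    proof (cases "s = p")
      case True
      then show ?thesis
        using P abelian_set_subset_centralizer[OF P(3) subgroup.subset[OF sP]] by blast
    next
      case False
      show ?thesis
      proof (cases "P \<lhd> G")
        case True
        show ?thesis using commuting_sylow_if_normal_sylow[OF P(1,2) True s(1)] .
      next
        case not_normal: False
        have "normalizer G P \<noteq> carrier G" using not_normal normalizer_eq_carrier_iff_normal[OF sP] by simp
        moreover have "x \<in> normalizer G P" using P(2) subgroup_subset_normalizer[OF sP] by blast
        ultimately have "abelian_set G (normalizer G P)"
          using overgroup_abelian normalizer_imp_subgroup[OF subgroup.subset[OF sP]] by blast
        then obtain K where "K \<lhd> G" "card K * card P = order G"
          using burnside_normal_complement[OF prime_p P(1)] by blast
        then show ?thesis using commuting_sylow_if_normal_complement[OF P(1,2) _ _ s(1) False] by blast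
      qed
    qed
  qed (use x_carrier in simp)
qed

lemma cyclic_x_normal: "cyclic_x \<lhd> G"
proof -
  have "x \<in> centralizer G (carrier G)"
    using x_central x_carrier centralizer_sym[of "{x}" "carrier G"] by auto
  then have "cyclic_x \<subseteq> centralizer G (carrier G)"
    unfolding cyclic_x_def using generate_subgroup_incl subgroup_centralizer[of "carrier G"] by simp
  then have "centralizer G cyclic_x = carrier G"
    using centralizer_sym[OF subgroup.subset[OF cyclic_x(1)], of "carrier G"]
      subgroup.subset[OF subgroup_centralizer[OF subgroup.subset[OF cyclic_x(1)]]] by auto
  then show ?thesis using central_imp_normal[OF cyclic_x(1)] by simp
qed

lemma abelian_sylow:
  assumes r: "prime r" and R: "sylow_subgroup G r R"
  shows "abelian_set G R"
proof -
  have sR: "subgroup R G" using R unfolding sylow_subgroup_def by blast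
  have H: "subgroup (cyclic_x <#> R) G" using mult_norm_subgroup[OF cyclic_x_normal sR] .
  have "card (cyclic_x <#> R) dvd p ^ k * r ^ multiplicity r (order G)"
    using card_set_mult_dvd[OF cyclic_x(1) sR] cyclic_x(3) R unfolding sylow_subgroup_def by simp
  then have "abelian_set G (cyclic_x <#> R)"
    using small_overgroup_abelian_two_primes[OF H] set_mult_subset_left[OF cyclic_x(1) sR] cyclic_x(2) prime_p r
    by blast
  then show ?thesis using abelian_set_subset set_mult_subset_right[OF cyclic_x(1) sR] by blast
qed

lemma normal_sylow_commutes:
  assumes r: "prime r" and R: "sylow_subgroup G r R" "R \<lhd> G"
    and s: "prime s" and S: "sylow_subgroup G s S"
  shows "S \<subseteq> centralizer G R"
proof -
  have sR: "subgroup R G" and sS: "subgroup S G" using R S unfolding sylow_subgroup_def by auto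
  have RS: "subgroup (R <#> S) G" using mult_norm_subgroup[OF R(2) sS] .
  define H where "H = cyclic_x <#> (R <#> S)"
  have sH: "subgroup H G" unfolding H_def using mult_norm_subgroup[OF cyclic_x_normal RS] .
  have "card (R <#> S) dvd r ^ multiplicity r (order G) * s ^ multiplicity s (order G)"
    using card_set_mult_dvd[OF sR sS] R S unfolding sylow_subgroup_def by simp
  then have "card H dvd p ^ k * r ^ multiplicity r (order G) * s ^ multiplicity s (order G)"
    unfolding H_def using dvd_trans[OF card_set_mult_dvd[OF cyclic_x(1) RS] mult_dvd_mono[OF dvd_refl]]
      cyclic_x(3) by (simp add: mult.assoc)
  moreover have "x \<in> H" unfolding H_def using set_mult_subset_left[OF cyclic_x(1) RS] cyclic_x(2) by blast
  ultimately have "abelian_set G H" using small_overgroup_abelian[OF sH _ _ prime_p r s] by blast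
  moreover have "R \<subseteq> H" "S \<subseteq> H"
    unfolding H_def using set_mult_subset_left[OF sR sS] set_mult_subset_right[OF sR sS]
      set_mult_subset_right[OF cyclic_x(1) RS] by auto
  ultimately show ?thesis
    using abelian_set_subset_centralizer[of _ R, OF _ subgroup.subset[OF sH]] by blast
qed

lemma sylow_central_if_abelian_complement:
  assumes r: "prime r" and R: "sylow_subgroup G r R"
    and K: "K \<lhd> G" "abelian_set G K" "card K * card R = order G"
  shows "centralizer G R = carrier G"
proof (rule centralizer_eq_carrier_if_sylows)
  have sK: "subgroup K G" using normal_imp_subgroup[OF K(1)] .
  show Rsub: "R \<subseteq> carrier G" using R subgroup.subset unfolding sylow_subgroup_def by blast
  fix s assume s: "prime s" "s dvd order G"
  show "\<exists>S. sylow_subgroup G s S \<and> S \<subseteq> centralizer G R"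
  proof (cases "s = r")
    case True
    then show ?thesis using R abelian_set_subset_centralizer[OF abelian_sylow[OF r R] Rsub] by blast
  next
    case False
    obtain S where S: "subgroup S G" "S \<subseteq> K" "card S = s ^ multiplicity s (card K)"
      using sylow_subgroup_of_subgroup_exists[OF sK s(1)] by blast
    have "multiplicity s (card K) = multiplicity s (order G)"
      using multiplicity_card_complement[OF sK _ s(1) r False] K(3) R
      unfolding sylow_subgroup_def by simp
    then have S_sylow: "sylow_subgroup G s S" using S unfolding sylow_subgroup_def by simp
    have "S \<lhd> G" using normal_sylow_of_normal_abelian[OF s(1) K(1,2) S] .
    then have "R \<subseteq> centralizer G S" using normal_sylow_commutes[OF s(1) S_sylow _ r R] by blast
    then show ?thesis using S_sylow centralizer_sym[OF subgroup.subset[OF S(1)] Rsub] by blast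
  qed
qed

lemma sylow_normal:
  assumes r: "prime r" "r dvd order G" "r \<noteq> p" and R: "sylow_subgroup G r R"
  shows "R \<lhd> G"
proof (cases "normalizer G R = carrier G")
  case True
  then show ?thesis using normalizer_eq_carrier_iff_normal R unfolding sylow_subgroup_def by blast
next
  case False
  have sR: "subgroup R G" using R unfolding sylow_subgroup_def by blast
  have Rsub: "R \<subseteq> carrier G" using subgroup.subset[OF sR] .
  have "R \<subseteq> centralizer G {x}" using x_central Rsub by simp
  then have "x \<in> centralizer G R" using centralizer_sym[of "{x}" R] x_carrier Rsub by simp
  then have "x \<in> normalizer G R" using centralizer_subset_normalizer[OF Rsub] by blast
  then have "abelian_set G (normalizer G R)"
    using overgroup_abelian normalizer_imp_subgroup[OF Rsub] False by blast
  then obtain K where K: "K \<lhd> G" "card K * card R = order G"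
    using burnside_normal_complement[OF r(1) R] by blast
  have sK: "subgroup K G" using normal_imp_subgroup[OF K(1)] .
  have card_R: "card R = r ^ multiplicity r (order G)" using R unfolding sylow_subgroup_def by blast
  have "coprime (ord x) (card R)"
    unfolding ord_x card_R using primes_coprime[OF prime_p r(1)] r(3) by simp
  then have "x \<in> K" using mem_normal_subgroup_if_coprime_index[OF K(1) x_carrier K(2)[symmetric]] by simp
  moreover have "K \<noteq> carrier G"
  proof
    assume "K = carrier G"
    then have "card R = 1" using K(2) order_pos unfolding order_def by (simp add: card_gt_0_iff)
    then show False
      using card_R r multiplicity_gt_zero_iff[of "order G" r] order_pos prime_gt_1_nat[of r] by simp
  qed
  ultimately have "abelian_set G K" using overgroup_abelian[OF sK] by blast
  then show ?thesis
    using central_imp_normal[OF sR] sylow_central_if_abelian_complement[OF r(1) R K(1) _ K(2)] by simp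
qed

lemma sylow_central:
  assumes r: "prime r" "r dvd order G" and R: "sylow_subgroup G r R"
  shows "centralizer G R = carrier G"
proof (rule centralizer_eq_carrier_if_sylows)
  have sR: "subgroup R G" using R unfolding sylow_subgroup_def by blast
  show "R \<subseteq> carrier G" using subgroup.subset[OF sR] .
  fix s assume s: "prime s" "s dvd order G"
  obtain S where S: "sylow_subgroup G s S" using sylow_subgroup_exists[OF s(1)] by blast
  have Ssub: "S \<subseteq> carrier G" using S subgroup.subset unfolding sylow_subgroup_def by blast
  consider "s = r" | "r \<noteq> p" | "s \<noteq> p" by blast
  then show "\<exists>S. sylow_subgroup G s S \<and> S \<subseteq> centralizer G R"
  proof cases
    case 1
    then show ?thesis
      using R abelian_set_subset_centralizer[OF abelian_sylow[OF r(1) R] subgroup.subset[OF sR]] by blast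
  next
    case 2
    then show ?thesis using normal_sylow_commutes[OF r(1) R sylow_normal[OF r 2 R] s(1) S] S by blast
  next
    case 3
    have "R \<subseteq> centralizer G S" using normal_sylow_commutes[OF s(1) S sylow_normal[OF s 3 S] r(1) R] .
    then show ?thesis using S centralizer_sym[OF Ssub subgroup.subset[OF sR]] by blast
  qed
qed

theorem abelian: "abelian_set G (carrier G)"
proof -
  have "centralizer G (carrier G) = carrier G"
  proof (rule centralizer_eq_carrier_if_sylows[OF subset_refl])
    fix s assume s: "prime s" "s dvd order G"
    obtain S where S: "sylow_subgroup G s S" using sylow_subgroup_exists[OF s(1)] by blast
    have "carrier G \<subseteq> centralizer G S" using sylow_central[OF s S] by simp
    then show "\<exists>S. sylow_subgroup G s S \<and> S \<subseteq> centralizer G (carrier G)"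
      using S centralizer_sym[OF _ subset_refl] subgroup.subset unfolding sylow_subgroup_def by blast
  qed
  then show ?thesis unfolding abelian_set_def centralizer_def by blast
qed

end

theorem theoremA:
  fixes G :: "('a, 'b) monoid_scheme"
  assumes "group G" and "finite (carrier G)"
    and "nonabelian_set G (carrier G)"
    and "exponent_critical G"
  shows "card (prime_factors (order G)) \<le> 3"
proof (rule ccontr)
  assume "\<not> card (prime_factors (order G)) \<le> 3"
  interpret finite_group G using assms(1,2) by (simp add: finite_group_def finite_group_axioms_def)
  obtain x q k where "x \<in> carrier G" "prime q" "ord x = q ^ k"
    "\<And>H. subgroup H G \<Longrightarrow> x \<in> H \<Longrightarrow> H \<noteq> carrier G \<Longrightarrow> abelian_set G H"
    using exponent_critical_witness[OF assms(4)] by blast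
  with \<open>\<not> card (prime_factors (order G)) \<le> 3\<close> interpret critical_element G x q k
    by unfold_locales auto
  show False using abelian assms(3) unfolding abelian_set_def nonabelian_set_def by blast
qed

end
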